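(* Fix a real $\alpha>4$. Let $A$ be the event that there exists a line $\ell$ of $Q$ not containing $x$ with $|\ell\cap U|\ge\lceil\log s\rceil$. Then $\mathbb{P}(A)\to 0$ as $s\to\infty$, uniformly over all locally sparse generalized quadrangles $Q$ of order $(s,t)$ with $t\ge s(\log s)^{2\alpha}$ and all points $x$ of $Q$.
   Context: A generalized quadrangle of order $(s,t)$ (with $s,t\ge 2$) is a point-line incidence structure in which every point lies on $t+1$ lines, every line contains $s+1$ points, two distinct points lie on at most one common line, and for every point $x$ and line $\ell$ with $x\notin\ell$ there is a unique point $x'\in\ell$ and a unique line $\ell'$ with $x,x'\in\ell'$. The quadrangle is locally sparse if for every set of three points, the number of points collinear with all three is at most $s+1$. Let $\mathcal{P}$ be the point set. For a point $u$, $u^{\perp}$ is the set of points collinear with $u$ (including $u$). For $R\subseteq\mathcal{P}$, $R^{\bowtie}=\bigcup_{y\in R}y^{\perp}$. Logarithms are natural. Random construction: fix $\alpha>4$ and a point $x$. Define $p$ by $ps=(s\log t-\alpha s\log\log s)/t$. Independently for each of the $t+1$ lines $\ell$ through $x$, with probability $ps$ the line is chosen, and on each chosen line one point of $\ell\setminus\{x\}$ is selected uniformly at random (independently). Let $S$ be the set of selected points and $U=\mathcal{P}\setminus(S\cup\{x\})^{\bowtie}$. *)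

theory Defs
  imports "HOL-Probability.Probability"
begin

text \<open>A point-line incidence structure is given by a point set P and a set L of
lines, each line being represented by its set of points (for s \<ge> 1 distinct lines of
a generalized quadrangle have distinct point sets, so this loses no generality).\<close>

definition gen_quadrangle :: "'a set \<Rightarrow> 'a set set \<Rightarrow> nat \<Rightarrow> nat \<Rightarrow> bool" where
  "gen_quadrangle P L s t \<longleftrightarrow>
     s \<ge> 2 \<and> t \<ge> 2 \<and>
     (\<forall>l\<in>L. l \<subseteq> P) \<and>
     (\<forall>l\<in>L. card l = s + 1) \<and>
     (\<forall>x\<in>P. card {l\<in>L. x \<in> l} = t + 1) \<and>
     (\<forall>x\<in>P. \<forall>y\<in>P. x \<noteq> y \<longrightarrow> card {l\<in>L. x \<in> l \<and> y \<in> l} \<le> 1) \<and>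
     (\<forall>x\<in>P. \<forall>l\<in>L. x \<notin> l \<longrightarrow>
        (\<exists>!pl. fst pl \<in> l \<and> snd pl \<in> L \<and> x \<in> snd pl \<and> fst pl \<in> snd pl))"

definition perp :: "'a set \<Rightarrow> 'a set set \<Rightarrow> 'a \<Rightarrow> 'a set" where
  "perp P L u = {y\<in>P. y = u \<or> (\<exists>l\<in>L. u \<in> l \<and> y \<in> l)}"

definition bowtie :: "'a set \<Rightarrow> 'a set set \<Rightarrow> 'a set \<Rightarrow> 'a set" where
  "bowtie P L R = (\<Union>y\<in>R. perp P L y)"

definition locally_sparse :: "'a set \<Rightarrow> 'a set set \<Rightarrow> nat \<Rightarrow> bool" where
  "locally_sparse P L s \<longleftrightarrow>
     (\<forall>a\<in>P. \<forall>b\<in>P. \<forall>c\<in>P. a \<noteq> b \<and> a \<noteq> c \<and> b \<noteq> c \<longrightarrow>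
        card (perp P L a \<inter> perp P L b \<inter> perp P L c) \<le> s + 1)"

definition ps_param :: "real \<Rightarrow> nat \<Rightarrow> nat \<Rightarrow> real" where
  "ps_param \<alpha> s t = (real s * ln (real t) - \<alpha> * real s * ln (ln (real s))) / real t"

definition lines_through :: "'a set set \<Rightarrow> 'a \<Rightarrow> 'a set set" where
  "lines_through L x = {l\<in>L. x \<in> l}"

definition selection :: "real \<Rightarrow> nat \<Rightarrow> nat \<Rightarrow> 'a set set \<Rightarrow> 'a \<Rightarrow> ('a set \<Rightarrow> 'a option) pmf" where
  "selection \<alpha> s t L x =
     Pi_pmf (lines_through L x) None
       (\<lambda>l. do { b \<leftarrow> bernoulli_pmf (ps_param \<alpha> s t);
                 if b then map_pmf Some (pmf_of_set (l - {x})) else return_pmf None })"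

definition selected_set :: "'a set set \<Rightarrow> 'a \<Rightarrow> ('a set \<Rightarrow> 'a option) \<Rightarrow> 'a set" where
  "selected_set L x f = {p. \<exists>l\<in>lines_through L x. f l = Some p}"

definition uncovered :: "'a set \<Rightarrow> 'a set set \<Rightarrow> 'a \<Rightarrow> ('a set \<Rightarrow> 'a option) \<Rightarrow> 'a set" where
  "uncovered P L x f = P - bowtie P L (selected_set L x f \<union> {x})"

definition event_A :: "'a set \<Rightarrow> 'a set set \<Rightarrow> nat \<Rightarrow> 'a \<Rightarrow> ('a set \<Rightarrow> 'a option) set" where
  "event_A P L s x = {f. \<exists>l\<in>L. x \<notin> l \<and>
      int (card (l \<inter> uncovered P L x f)) \<ge> \<lceil>ln (real s)\<rceil>}"

end

theory Submission
  imports Defs "HOL-Real_Asymp.Real_Asymp"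
begin

(* Put q = ps, k = ceil(ln s) and call a pair (l, T) a witness if l is a
   line missing x and T is a k-subset of l outside x^perp.  If event A occurs, some
   witness has T inside U, so no selected point is collinear with a point of T.
   For a line m through x, let the shadow of T on m be the set of points of m - {x}
   collinear with some point of T.  Projecting T onto m is injective unless m passes
   through the projection of x onto l, so all but one of the t + 1 lines through x
   carry a shadow of size at least k.  Since the lines through x are treated
   independently, T stays uncovered with probability at most
   prod_m (1 - q |shadow| / s) <= exp (- q k t / s).  A union bound over at most
   |L| (s+1 choose k) <= 18 s^2 t^3 (s+1)^k witnesses and the hypothesis
   t >= s (ln s)^(2 alpha) bound P(A) by exp (decay s), where decay s tends to -infinity. *)

definition line_choice :: "real \<Rightarrow> 'a set \<Rightarrow> 'a option pmf" where
  "line_choice q M =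
     bernoulli_pmf q \<bind> (\<lambda>b. if b then map_pmf Some (pmf_of_set M) else return_pmf None)"

lemma selection_eq_Pi_line_choice:
  "selection \<alpha> s t L x = Pi_pmf (lines_through L x) None (\<lambda>m. line_choice (ps_param \<alpha> s t) (m - {x}))"
  unfolding selection_def line_choice_def by simp

lemma line_choice_avoid:
  assumes M: "finite M" "M \<noteq> {}" and B: "B \<subseteq> M" and q: "0 \<le> q" "q \<le> 1"
  shows "measure_pmf.prob (line_choice q M) (- (Some ` B)) = 1 - q * card B / card M"
proof -
  define D where "D = line_choice q M"
  have pmf_Some: "pmf D (Some w) = q / card M" if "w \<in> M" for w
  proof -
    have "pmf D (Some w) = pmf (map_pmf Some (pmf_of_set M)) (Some w) * q"
      using q unfolding D_def line_choice_def by (simp add: pmf_bind)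
    also have "pmf (map_pmf Some (pmf_of_set M)) (Some w) = pmf (pmf_of_set M) w"
      by (rule pmf_map_inj') (simp add: inj_def)
    finally show ?thesis using M that by simp
  qed
  have "measure_pmf.prob D (Some ` B) = (\<Sum>w\<in>B. pmf D (Some w))"
    using finite_subset[OF B M(1)]
    by (subst measure_measure_pmf_finite) (auto simp: sum.reindex inj_on_def)
  also have "\<dots> = q * card B / card M"
    using pmf_Some B by (simp add: subset_iff)
  finally show ?thesis
    using measure_pmf.prob_compl[of "Some ` B" D] unfolding D_def by (simp add: Compl_eq_Diff_UNIV)
qed

lemma line_choice_avoid_le_exp:
  assumes "finite M" "M \<noteq> {}" "B \<subseteq> M" "0 \<le> q" "q \<le> 1"
  shows "measure_pmf.prob (line_choice q M) (- (Some ` B)) \<le> exp (- (q / card M) * card B)"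
  using line_choice_avoid[OF assms] exp_ge_add_one_self[of "- (q / card M) * card B"] by simp

section \<open>Generalized quadrangles\<close>

locale gen_quad =
  fixes P :: "'a set" and L :: "'a set set" and s t :: nat
  assumes gq: "gen_quadrangle P L s t"
begin

lemma order_ge_2: "s \<ge> 2" "t \<ge> 2"
  using gq unfolding gen_quadrangle_def by auto

lemma line_subset: "l \<in> L \<Longrightarrow> l \<subseteq> P"
  using gq unfolding gen_quadrangle_def by auto

lemma card_line: "l \<in> L \<Longrightarrow> card l = s + 1"
  using gq unfolding gen_quadrangle_def by auto

lemma finite_line: "l \<in> L \<Longrightarrow> finite l"
  using card_line by (metis add_eq_0_iff_both_eq_0 card.infinite one_neq_zero)

lemma card_lines_through: "y \<in> P \<Longrightarrow> card (lines_through L y) = t + 1"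
  using gq unfolding gen_quadrangle_def lines_through_def by auto

lemma finite_lines_through: "y \<in> P \<Longrightarrow> finite (lines_through L y)"
  using card_lines_through by (metis add_eq_0_iff_both_eq_0 card.infinite one_neq_zero)

lemma unique_line:
  assumes "y \<in> P" "z \<in> P" "y \<noteq> z" "l \<in> L" "l' \<in> L" "y \<in> l" "z \<in> l" "y \<in> l'" "z \<in> l'"
  shows "l = l'"
proof (rule ccontr)
  assume "l \<noteq> l'"
  have "finite {l\<in>L. y \<in> l \<and> z \<in> l}"
    using finite_lines_through[OF assms(1)] by (rule finite_subset[rotated]) (auto simp: lines_through_def)
  then have "card {l, l'} \<le> card {l\<in>L. y \<in> l \<and> z \<in> l}"
    using assms by (intro card_mono) auto
  moreover have "card {l\<in>L. y \<in> l \<and> z \<in> l} \<le> 1"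
    using gq assms(1-3) unfolding gen_quadrangle_def by auto
  ultimately show False using \<open>l \<noteq> l'\<close> by simp
qed

lemma projection_exists:
  assumes "y \<in> P" "l \<in> L" "y \<notin> l"
  obtains w n where "w \<in> l" "n \<in> L" "y \<in> n" "w \<in> n"
proof -
  have "\<exists>!pl. fst pl \<in> l \<and> snd pl \<in> L \<and> y \<in> snd pl \<and> fst pl \<in> snd pl"
    using gq assms unfolding gen_quadrangle_def by auto
  then show ?thesis using that by auto
qed

lemma projection_unique:
  assumes "y \<in> P" "l \<in> L" "y \<notin> l"
    and "w \<in> l" "n \<in> L" "y \<in> n" "w \<in> n"
    and "w' \<in> l" "n' \<in> L" "y \<in> n'" "w' \<in> n'"
  shows "w = w'"
proof -
  have "\<exists>!pl. fst pl \<in> l \<and> snd pl \<in> L \<and> y \<in> snd pl \<and> fst pl \<in> snd pl"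
    using gq assms unfolding gen_quadrangle_def by auto
  then have "(w, n) = (w', n')" using assms by (metis fst_conv snd_conv)
  then show ?thesis by simp
qed

lemma card_pencil_through_point:
  assumes "x \<in> P" "x' \<in> P" "x \<noteq> x'"
  shows "card {m\<in>lines_through L x. x' \<in> m} \<le> 1"
proof -
  define S where "S = {m\<in>lines_through L x. x' \<in> m}"
  have "finite S" using finite_lines_through[OF assms(1)] S_def by simp
  moreover have "\<forall>a\<in>S. \<forall>b\<in>S. a = b"
    using unique_line[OF assms] unfolding S_def lines_through_def by auto
  ultimately show ?thesis using card_le_Suc0_iff_eq[of S] S_def by simp
qed

lemma perp_I: "n \<in> L \<Longrightarrow> w \<in> n \<Longrightarrow> y \<in> n \<Longrightarrow> y \<in> perp P L w"
  using line_subset unfolding perp_def by auto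

lemma card_perp:
  assumes "y \<in> P"
  shows "finite (perp P L y)" "card (perp P L y) \<le> 1 + (t + 1) * (s + 1)"
proof -
  have sub: "perp P L y \<subseteq> insert y (\<Union>(lines_through L y))"
    unfolding perp_def lines_through_def by auto
  have fin: "finite (\<Union>(lines_through L y))"
    using finite_lines_through[OF assms] finite_line by (auto simp: lines_through_def)
  then show "finite (perp P L y)" using sub finite_subset by blast
  have "card (\<Union>(lines_through L y)) \<le> (\<Sum>l\<in>lines_through L y. card l)"
    by (rule card_Union_le_sum_card)
  also have "\<dots> = (t + 1) * (s + 1)"
    using card_lines_through[OF assms] card_line by (simp add: lines_through_def)
  finally have "card (insert y (\<Union>(lines_through L y))) \<le> 1 + (t + 1) * (s + 1)"
    by (simp add: card_insert_if fin)
  then show "card (perp P L y) \<le> 1 + (t + 1) * (s + 1)"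
    using card_mono[OF finite_insert[THEN iffD2, OF fin] sub] by linarith
qed

lemma points_near:
  assumes "x \<in> P"
  shows "P \<subseteq> (\<Union>y\<in>perp P L x. perp P L y)"
proof
  fix z assume z: "z \<in> P"
  have "lines_through L x \<noteq> {}" using card_lines_through[OF assms] by force
  then obtain m where m: "m \<in> L" "x \<in> m" by (auto simp: lines_through_def)
  show "z \<in> (\<Union>y\<in>perp P L x. perp P L y)"
  proof (cases "z \<in> m")
    case True
    then have "z \<in> perp P L x" using perp_I[OF m] by blast
    moreover have "z \<in> perp P L z" using z by (simp add: perp_def)
    ultimately show ?thesis by blast
  next
    case False
    then obtain w n where "w \<in> m" "n \<in> L" "z \<in> n" "w \<in> n"
      using projection_exists[OF z m(1)] by blast
    then show ?thesis using perp_I[OF m] perp_I by blast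
  qed
qed

lemma card_points:
  assumes "x \<in> P"
  shows "finite P" "card P \<le> (1 + (t + 1) * (s + 1))^2"
proof -
  define c where "c = 1 + (t + 1) * (s + 1)"
  define N where "N = (\<Union>y\<in>perp P L x. perp P L y)"
  have perp_P: "perp P L x \<subseteq> P" unfolding perp_def by auto
  have fin: "finite N"
    unfolding N_def using card_perp perp_P assms by auto
  then show "finite P" using points_near[OF assms] N_def finite_subset by metis
  have "card N \<le> (\<Sum>y\<in>perp P L x. card (perp P L y))"
    unfolding N_def by (rule card_UN_le) (use card_perp(1)[OF assms] in auto)
  also have "\<dots> \<le> card (perp P L x) * c"
    using sum_bounded_above[of "perp P L x" "\<lambda>y. card (perp P L y)" c] card_perp perp_P c_def by auto
  also have "\<dots> \<le> c * c" using card_perp(2)[OF assms, folded c_def] by (rule mult_le_mono1)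
  finally show "card P \<le> (1 + (t + 1) * (s + 1))^2"
    using card_mono[OF fin points_near[OF assms, folded N_def]] c_def by (simp add: power2_eq_square)
qed

lemma card_lines:
  assumes "x \<in> P"
  shows "finite L" "real (card L) \<le> 18 * real s ^ 2 * real t ^ 3"
proof -
  have sub: "L \<subseteq> (\<Union>y\<in>P. lines_through L y)"
  proof
    fix l assume l: "l \<in> L"
    then obtain y where "y \<in> l" using card_line by fastforce
    then show "l \<in> (\<Union>y\<in>P. lines_through L y)" using l line_subset unfolding lines_through_def by blast
  qed
  have fin: "finite (\<Union>y\<in>P. lines_through L y)"
    using card_points(1)[OF assms] finite_lines_through by auto
  then show "finite L" using sub finite_subset by blast
  have "card L \<le> (\<Sum>y\<in>P. card (lines_through L y))"
    by (rule le_trans[OF card_mono[OF fin sub] card_UN_le[OF card_points(1)[OF assms]]])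
  also have "\<dots> = card P * (t + 1)" using card_lines_through by simp
  also have "\<dots> \<le> (3 * (s * t))^2 * (2 * t)"
  proof (intro mult_le_mono le_trans[OF card_points(2)[OF assms]] power_mono)
    have "2 * s \<le> s * t" "2 * t \<le> s * t" using order_ge_2 by simp_all
    moreover have "1 + (t + 1) * (s + 1) = s * t + s + t + 2" by (simp add: algebra_simps)
    ultimately show "1 + (t + 1) * (s + 1) \<le> 3 * (s * t)" using order_ge_2 by linarith
  qed (use order_ge_2 in auto)
  also have "\<dots> = 18 * s^2 * t^3" by (simp add: power2_eq_square power3_eq_cube algebra_simps)
  finally have "real (card L) \<le> real (18 * s^2 * t^3)" by (rule of_nat_mono)
  then show "real (card L) \<le> 18 * real s ^ 2 * real t ^ 3" by simp
qed

end

section \<open>Shadows of uncovered sets on the lines through x\<close>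

text \<open>The points of m - {x} collinear with some point of T: selecting any of them covers T.\<close>
definition shadow :: "'a set \<Rightarrow> 'a set set \<Rightarrow> 'a \<Rightarrow> 'a set \<Rightarrow> 'a set \<Rightarrow> 'a set" where
  "shadow P L x T m = {w \<in> m - {x}. \<exists>y\<in>T. y \<in> perp P L w}"

definition avoid_event :: "'a set \<Rightarrow> 'a set set \<Rightarrow> 'a \<Rightarrow> 'a set \<Rightarrow> ('a set \<Rightarrow> 'a option) set" where
  "avoid_event P L x T = Pi (lines_through L x) (\<lambda>m. - (Some ` shadow P L x T m))"

definition witnesses :: "'a set \<Rightarrow> 'a set set \<Rightarrow> 'a \<Rightarrow> nat \<Rightarrow> ('a set \<times> 'a set) set" where
  "witnesses P L x k = {(l, T). l \<in> L \<and> x \<notin> l \<and> T \<subseteq> l - perp P L x \<and> card T = k}"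

lemma event_A_subset_avoid_events:
  assumes k: "k = nat \<lceil>ln (real s)\<rceil>"
  shows "event_A P L s x \<subseteq> (\<Union>(l, T)\<in>witnesses P L x k. avoid_event P L x T)"
proof
  fix f assume "f \<in> event_A P L s x"
  then obtain l where l: "l \<in> L" "x \<notin> l" and big: "int (card (l \<inter> uncovered P L x f)) \<ge> \<lceil>ln (real s)\<rceil>"
    unfolding event_A_def by blast
  have "k \<le> card (l \<inter> uncovered P L x f)" using big k by linarith
  then obtain T where T: "T \<subseteq> l \<inter> uncovered P L x f" "card T = k" by (metis obtain_subset_with_card_n)
  have "uncovered P L x f \<inter> perp P L x = {}"
    unfolding uncovered_def bowtie_def by auto
  then have "(l, T) \<in> witnesses P L x k" using T l unfolding witnesses_def by auto
  moreover have "f \<in> avoid_event P L x T"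
    unfolding avoid_event_def
  proof (intro Pi_I ComplI)
    fix m assume m: "m \<in> lines_through L x" and "f m \<in> Some ` shadow P L x T m"
    then obtain w y where w: "f m = Some w" and y: "y \<in> T" "y \<in> perp P L w"
      unfolding shadow_def by auto
    have "w \<in> selected_set L x f" using m w unfolding selected_set_def by auto
    then have "y \<notin> uncovered P L x f" using y unfolding uncovered_def bowtie_def by auto
    then show False using T y by auto
  qed
  ultimately show "f \<in> (\<Union>(l, T)\<in>witnesses P L x k. avoid_event P L x T)" by blast
qed

context gen_quad
begin

text \<open>Let x' be the projection of x onto l and m a line through x missing x'.  Then
  projecting T onto m is injective and lands in the shadow, so the shadow is as large as T.\<close>
lemma card_shadow_ge:
  assumes x: "x \<in> P" and l: "l \<in> L" "x \<notin> l" and T: "T \<subseteq> l - perp P L x"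
    and m: "m \<in> L" "x \<in> m"
    and x': "x' \<in> l" "n \<in> L" "x \<in> n" "x' \<in> n" "x' \<notin> m"
  shows "card T \<le> card (shadow P L x T m)"
proof -
  have proj_ex: "\<exists>w. w \<in> m \<and> (\<exists>n\<in>L. y \<in> n \<and> w \<in> n)" if y: "y \<in> T" for y
  proof -
    have "y \<in> P" "y \<notin> m" using y T l line_subset perp_I[OF m] by auto
    then show ?thesis using projection_exists[OF _ m(1)] by metis
  qed
  define proj where "proj y = (SOME w. w \<in> m \<and> (\<exists>n\<in>L. y \<in> n \<and> w \<in> n))" for y
  have proj: "proj y \<in> m" "\<exists>n\<in>L. y \<in> n \<and> proj y \<in> n" if "y \<in> T" for y
    using someI_ex[OF proj_ex[OF that]] unfolding proj_def by auto
  have "proj ` T \<subseteq> shadow P L x T m"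
  proof
    fix w assume "w \<in> proj ` T"
    then obtain y n where y: "y \<in> T" "w = proj y" and n: "n \<in> L" "y \<in> n" "w \<in> n"
      using proj by blast
    then have "w \<noteq> x" using T perp_I[OF n(1) _ n(2)] by auto
    then show "w \<in> shadow P L x T m"
      unfolding shadow_def using proj(1)[OF y(1)] y perp_I[OF n(1) n(3) n(2)] by auto
  qed
  moreover have "inj_on proj T"
  proof (rule inj_onI, rule ccontr)
    fix y z assume y: "y \<in> T" and z: "z \<in> T" and eq: "proj y = proj z" and "y \<noteq> z"
    define w where "w = proj y"
    obtain ny nz where ny: "ny \<in> L" "y \<in> ny" "w \<in> ny" and nz: "nz \<in> L" "z \<in> nz" "w \<in> nz"
      using proj(2)[OF y] proj(2)[OF z] eq unfolding w_def by metis
    have wm: "w \<in> m" using proj(1)[OF y] w_def by simp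
    show False
    proof (cases "w \<in> l")
      case True
      have "w = x'" by (rule projection_unique[OF x l True m(1) m(2) wm x'(1-4)])
      then show False using wm x'(5) by simp
    next
      case False
      have "w \<in> P" using wm m line_subset by auto
      then have "y = z" using projection_unique[OF _ l(1) False _ ny(1) ny(3) ny(2) _ nz(1) nz(3) nz(2)] y z T by blast
      then show False using \<open>y \<noteq> z\<close> by simp
    qed
  qed
  moreover have "finite (shadow P L x T m)"
    using finite_line[OF m(1)] unfolding shadow_def by auto
  ultimately show ?thesis using card_inj_on_le by blast
qed

lemma sum_card_shadow_ge:
  assumes x: "x \<in> P" and w: "(l, T) \<in> witnesses P L x k"
  shows "real k * real t \<le> (\<Sum>m\<in>lines_through L x. real (card (shadow P L x T m)))"
proof -
  have l: "l \<in> L" "x \<notin> l" and T: "T \<subseteq> l - perp P L x" "card T = k"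
    using w unfolding witnesses_def by auto
  obtain x' n where x': "x' \<in> l" "n \<in> L" "x \<in> n" "x' \<in> n" using projection_exists[OF x l] by blast
  define Lx where "Lx = lines_through L x"
  define M0 where "M0 = {m\<in>Lx. x' \<in> m}"
  have fin: "finite Lx" using finite_lines_through[OF x] Lx_def by simp
  have "card M0 \<le> 1"
    unfolding M0_def Lx_def using x' l line_subset by (intro card_pencil_through_point[OF x]) auto
  then have "t \<le> card (Lx - M0)"
    using card_Diff_subset[of M0 Lx] fin card_lines_through[OF x] unfolding Lx_def M0_def by fastforce
  then have "real k * real t \<le> (\<Sum>m\<in>Lx - M0. real k)"
    using mult_left_mono[of "real t" "real (card (Lx - M0))" "real k"] by (simp add: mult.commute)
  also have "\<dots> \<le> (\<Sum>m\<in>Lx - M0. real (card (shadow P L x T m)))"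
    using card_shadow_ge[OF x l T(1) _ _ x'] T(2) unfolding Lx_def M0_def lines_through_def
    by (intro sum_mono) auto
  also have "\<dots> \<le> (\<Sum>m\<in>Lx. real (card (shadow P L x T m)))"
    using fin by (intro sum_mono2) auto
  finally show ?thesis unfolding Lx_def .
qed

section \<open>The union bound\<close>

text \<open>Independence across the pencil at x: a witness stays uncovered with probability
  at most exp (- q k t / s).\<close>
lemma prob_avoid_event_le:
  assumes x: "x \<in> P" and w: "(l, T) \<in> witnesses P L x k" and q: "0 \<le> q" "q \<le> 1"
  shows "measure_pmf.prob (Pi_pmf (lines_through L x) None (\<lambda>m. line_choice q (m - {x})))
           (avoid_event P L x T) \<le> exp (- (q / s) * (real k * real t))"
proof -
  define Lx where "Lx = lines_through L x"
  define sh where "sh m = shadow P L x T m" for m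
  have line: "finite (m - {x})" "m - {x} \<noteq> {}" "sh m \<subseteq> m - {x}" "card (m - {x}) = s"
    if "m \<in> Lx" for m
  proof -
    show "card (m - {x}) = s" using that card_line unfolding Lx_def lines_through_def by simp
    then show "m - {x} \<noteq> {}" using order_ge_2 by (metis card.empty not_numeral_le_zero)
    show "finite (m - {x})" using that finite_line unfolding Lx_def lines_through_def by simp
    show "sh m \<subseteq> m - {x}" unfolding sh_def shadow_def by auto
  qed
  have fin: "finite Lx" using finite_lines_through[OF x] Lx_def by simp
  have "measure_pmf.prob (Pi_pmf Lx None (\<lambda>m. line_choice q (m - {x}))) (avoid_event P L x T)
      = (\<Prod>m\<in>Lx. measure_pmf.prob (line_choice q (m - {x})) (- (Some ` sh m)))"
    unfolding avoid_event_def Lx_def sh_def by (rule measure_Pi_pmf_Pi[OF finite_lines_through[OF x]])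
  also have "\<dots> \<le> (\<Prod>m\<in>Lx. exp (- (q / s) * card (sh m)))"
  proof (rule prod_mono)
    fix m assume m: "m \<in> Lx"
    show "0 \<le> measure_pmf.prob (line_choice q (m - {x})) (- (Some ` sh m)) \<and>
        measure_pmf.prob (line_choice q (m - {x})) (- (Some ` sh m)) \<le> exp (- (q / s) * card (sh m))"
      using line_choice_avoid_le_exp[OF line(1-3)[OF m] q] line(4)[OF m] by simp
  qed
  also have "\<dots> = exp (- (q / s) * (\<Sum>m\<in>Lx. real (card (sh m))))"
    by (simp add: exp_sum[OF fin] sum_distrib_left)
  also have "\<dots> \<le> exp (- (q / s) * (real k * real t))"
    using mult_left_mono[OF sum_card_shadow_ge[OF x w], of "q / s"] q unfolding Lx_def sh_def by simp
  finally show ?thesis unfolding Lx_def .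
qed

lemma card_witnesses:
  assumes x: "x \<in> P"
  shows "finite (witnesses P L x k)" "card (witnesses P L x k) \<le> card L * ((s + 1) choose k)"
proof -
  define W where "W = Sigma L (\<lambda>l. {T. T \<subseteq> l \<and> card T = k})"
  have sub: "witnesses P L x k \<subseteq> W" unfolding witnesses_def W_def by auto
  have fin: "finite W"
    unfolding W_def using card_lines(1)[OF x] finite_line by (intro finite_SigmaI) auto
  then show "finite (witnesses P L x k)" using sub finite_subset by blast
  have "card W = (\<Sum>l\<in>L. card {T. T \<subseteq> l \<and> card T = k})"
    unfolding W_def using card_lines(1)[OF x] finite_line by (intro card_SigmaI) auto
  also have "\<dots> = card L * ((s + 1) choose k)"
    using finite_line card_line by (simp add: n_subsets)
  finally show "card (witnesses P L x k) \<le> card L * ((s + 1) choose k)"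
    using card_mono[OF fin sub] by simp
qed

lemma prob_event_A_le:
  assumes x: "x \<in> P" and q: "0 \<le> ps_param \<alpha> s t" "ps_param \<alpha> s t \<le> 1"
    and k: "k = nat \<lceil>ln (real s)\<rceil>"
  shows "measure_pmf.prob (selection \<alpha> s t L x) (event_A P L s x)
          \<le> real (card L * ((s + 1) choose k)) * exp (- (ps_param \<alpha> s t / s) * (real k * real t))"
proof -
  define W where "W = witnesses P L x k"
  define Q where "Q = Pi_pmf (lines_through L x) None (\<lambda>m. line_choice (ps_param \<alpha> s t) (m - {x}))"
  define b where "b = exp (- (ps_param \<alpha> s t / s) * (real k * real t))"
  have "measure_pmf.prob (selection \<alpha> s t L x) (event_A P L s x)
      \<le> measure_pmf.prob Q (\<Union>(l, T)\<in>W. avoid_event P L x T)"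
    unfolding selection_eq_Pi_line_choice Q_def W_def
    by (intro measure_pmf.finite_measure_mono event_A_subset_avoid_events[OF k]) auto
  also have "\<dots> \<le> (\<Sum>(l, T)\<in>W. measure_pmf.prob Q (avoid_event P L x T))"
    using measure_pmf.finite_measure_subadditive_finite[of W "\<lambda>(l, T). avoid_event P L x T" Q]
      card_witnesses(1)[OF x] unfolding W_def by (simp add: split_def)
  also have "\<dots> \<le> (\<Sum>(l, T)\<in>W. b)"
    using prob_avoid_event_le[OF x _ q] unfolding Q_def W_def b_def by (intro sum_mono) auto
  also have "\<dots> = real (card W) * b" by simp
  also have "\<dots> \<le> real (card L * ((s + 1) choose k)) * b"
    using card_witnesses(2)[OF x, of k] unfolding W_def b_def
    by (intro mult_right_mono) (simp_all only: of_nat_le_iff exp_ge_zero)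
  finally show ?thesis unfolding b_def .
qed

end

section \<open>Asymptotic estimates\<close>

text \<open>The map T \<mapsto> T - S ln T is increasing for T \<ge> S, so S ln T \<le> T propagates upwards.\<close>
lemma mult_ln_le_self_mono:
  fixes S t0 T :: real
  assumes S: "S > 0" "S \<le> t0" and base: "S * ln t0 \<le> t0" and T: "t0 \<le> T"
  shows "S * ln T \<le> T"
proof -
  have t0: "t0 > 0" using S by simp
  have "ln (T / t0) \<le> T / t0 - 1" using T t0 by (intro ln_le_minus_one) simp
  then have "ln T \<le> ln t0 + (T - t0) / t0" using T t0 by (simp add: ln_divide_pos diff_divide_distrib)
  then have "S * ln T \<le> S * (ln t0 + (T - t0) / t0)" using S by (intro mult_left_mono) auto
  also have "\<dots> = S * ln t0 + (S / t0) * (T - t0)" using t0 by (simp add: field_simps)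
  also have "(S / t0) * (T - t0) \<le> 1 * (T - t0)" using S T t0 by (intro mult_right_mono) auto
  finally show ?thesis using base by simp
qed

lemma ps_param_bounds:
  fixes \<alpha> :: real and s t :: nat
  assumes a: "\<alpha> > 4" and y: "ln (real s) \<ge> 1 + 2 * \<alpha>" and s0: "s > 0"
    and t: "real t \<ge> real s * ln (real s) powr (2 * \<alpha>)"
  shows "0 \<le> ps_param \<alpha> s t" "ps_param \<alpha> s t \<le> 1"
    and "ln (real t) \<ge> ln (real s) + 2 * \<alpha> * ln (ln (real s))"
proof -
  define y where "y = ln (real s)"
  define t0 where "t0 = real s * y powr (2 * \<alpha>)"
  have y1: "y \<ge> 1" using y a y_def by simp
  have "y\<^sup>2 \<le> y powr (2 * \<alpha>)"
    using powr_mono[of 2 "2 * \<alpha>" y] a y1 by simp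
  then have y2t0: "real s * y\<^sup>2 \<le> t0" unfolding t0_def using s0 by simp
  have t0s: "real s \<le> t0"
    using y2t0 mult_left_mono[of 1 "y\<^sup>2" "real s"] y1 one_le_power[of y 2] by linarith
  have t0: "t0 > 0" using t0s s0 by simp
  have lnt0: "ln t0 = y + 2 * \<alpha> * ln y"
    unfolding t0_def using s0 y1 by (subst ln_mult_pos) (auto simp: y_def)
  have tt0: "t0 \<le> real t" using t unfolding t0_def y_def .
  then have "ln t0 \<le> ln (real t)" using t0 by simp
  then show lnt: "ln (real t) \<ge> ln (real s) + 2 * \<alpha> * ln (ln (real s))"
    using lnt0 unfolding y_def by simp
  have lny: "0 \<le> ln y" "ln y \<le> y" using y1 ln_le_minus_one[of y] by auto
  have "real s * ln t0 \<le> real s * y\<^sup>2"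
  proof -
    have "ln t0 \<le> (1 + 2 * \<alpha>) * y" using lnt0 lny a by (simp add: algebra_simps)
    also have "\<dots> \<le> y * y" using y y1 unfolding y_def by (intro mult_right_mono) auto
    finally show ?thesis using s0 by (simp add: power2_eq_square)
  qed
  then have "real s * ln t0 \<le> t0" using y2t0 by linarith
  then have "real s * ln (real t) \<le> real t"
    using mult_ln_le_self_mono[OF _ t0s _ tt0] s0 by simp
  moreover have "\<alpha> * ln y \<le> ln (real t)"
    using lnt lny(1) a y1 mult_nonneg_nonneg[of \<alpha> "ln y"] unfolding y_def by linarith
  moreover have "0 \<le> real s * (\<alpha> * ln y)" using a lny by simp
  moreover have "t > 0" using t0 tt0 by simp
  moreover have "ps_param \<alpha> s t = real s * (ln (real t) - \<alpha> * ln y) / real t"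
    unfolding ps_param_def y_def by (simp add: algebra_simps)
  ultimately show "0 \<le> ps_param \<alpha> s t" "ps_param \<alpha> s t \<le> 1"
    by (auto simp: pos_divide_le_eq right_diff_distrib mult_left_mono)
qed

lemma binomial_le_pow_any: "n choose k \<le> n ^ k"
  by (cases "k \<le> n") (simp_all add: binomial_le_pow binomial_eq_0)

text \<open>The exponent of the union bound, after inserting ln t \<ge> ln s + 2 alpha ln ln s and
  k = ceil (ln s); the result no longer depends on t or alpha.\<close>
definition decay :: "real \<Rightarrow> real" where
  "decay s = ln 18 + 5 * ln s + (ln s + 1) / s - 4 * (ln s - 6) * ln (ln s)"

lemma decay_tendsto_bot: "filterlim decay at_bot at_top"
  unfolding decay_def by real_asymp

lemma union_bound_exponent_le_decay:
  fixes \<alpha> s t kr :: real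
  assumes a: "\<alpha> > 4" and y6: "ln s \<ge> 6" and s0: "s > 0"
    and lt: "ln t \<ge> ln s + 2 * \<alpha> * ln (ln s)"
    and k1: "ln s \<le> kr" and k2: "kr \<le> ln s + 1"
  shows "ln 18 + 2 * ln s + 3 * ln t + kr * ln (s + 1) - kr * (ln t - \<alpha> * ln (ln s)) \<le> decay s"
proof -
  define y where "y = ln s"
  define L2 where "L2 = ln y"
  have L2: "L2 \<ge> 0" unfolding L2_def y_def using y6 by simp
  have k3: "kr - 3 \<ge> 0" using k1 y6 by simp
  have A: "(kr - 3) * ln t \<ge> (kr - 3) * (y + 2 * \<alpha> * L2)"
    using mult_left_mono[OF lt k3] unfolding y_def L2_def by simp
  have "ln (s + 1) = y + ln (1 + 1 / s)"
    using s0 ln_mult_pos[of s "1 + 1 / s"] unfolding y_def by (simp add: distrib_left add_pos_pos)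
  also have "ln (1 + 1 / s) \<le> 1 / s" using s0 by (intro ln_add_one_self_le_self) simp
  finally have B: "kr * ln (s + 1) \<le> kr * y + kr / s"
    using mult_left_mono[of "ln (s + 1)" "y + 1 / s" kr] k3 by (simp add: algebra_simps)
  have C: "kr / s \<le> (y + 1) / s" using k2 s0 unfolding y_def by (simp add: divide_right_mono)
  have D: "(\<alpha> - 4) * L2 * (6 - y) \<le> 0"
    using a L2 y6 unfolding y_def by (intro mult_nonneg_nonpos) auto
  have E: "\<alpha> * L2 * (6 - kr) \<le> \<alpha> * L2 * (6 - y)"
    using a L2 k1 unfolding y_def by (intro mult_left_mono) auto
  show ?thesis using A B C D E unfolding decay_def y_def[symmetric] L2_def[symmetric]
    by (simp add: algebra_simps)
qed

lemma union_bound_le_exp_decay: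
  fixes \<alpha> s t :: real and k :: nat
  assumes "\<alpha> > 4" "ln s \<ge> 6" "s > 0" "t > 0"
    and "ln t \<ge> ln s + 2 * \<alpha> * ln (ln s)" and "ln s \<le> real k" "real k \<le> ln s + 1"
  shows "18 * s ^ 2 * t ^ 3 * (s + 1) ^ k * exp (- (real k * (ln t - \<alpha> * ln (ln s))))
           \<le> exp (decay s)"
proof -
  have "ln (18 * s ^ 2 * t ^ 3 * (s + 1) ^ k) = ln 18 + 2 * ln s + 3 * ln t + real k * ln (s + 1)"
    using assms(3,4) by (simp add: ln_mult_pos ln_realpow)
  then have "18 * s ^ 2 * t ^ 3 * (s + 1) ^ k = exp (ln 18 + 2 * ln s + 3 * ln t + real k * ln (s + 1))"
    using assms(3,4) by (metis exp_ln zero_less_power add_pos_pos zero_less_one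
      mult_pos_pos zero_less_numeral)
  then have "18 * s ^ 2 * t ^ 3 * (s + 1) ^ k * exp (- (real k * (ln t - \<alpha> * ln (ln s))))
      = exp (ln 18 + 2 * ln s + 3 * ln t + real k * ln (s + 1)) * exp (- (real k * (ln t - \<alpha> * ln (ln s))))"
    by simp
  then have "18 * s ^ 2 * t ^ 3 * (s + 1) ^ k * exp (- (real k * (ln t - \<alpha> * ln (ln s))))
      = exp (ln 18 + 2 * ln s + 3 * ln t + real k * ln (s + 1) - real k * (ln t - \<alpha> * ln (ln s)))"
    by (simp only: exp_add[symmetric] diff_conv_add_uminus)
  then show ?thesis using union_bound_exponent_le_decay[OF assms(1-3,5-7)] by simp
qed

context gen_quad
begin

lemma prob_event_A_le_exp_decay:
  fixes \<alpha> :: real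
  assumes a: "\<alpha> > 4" and y: "ln (real s) \<ge> 6" "ln (real s) \<ge> 1 + 2 * \<alpha>"
    and t: "real t \<ge> real s * ln (real s) powr (2 * \<alpha>)" and x: "x \<in> P"
  shows "measure_pmf.prob (selection \<alpha> s t L x) (event_A P L s x) \<le> exp (decay (real s))"
proof -
  define k where "k = nat \<lceil>ln (real s)\<rceil>"
  have s0: "s > 0" and t0: "t > 0" using order_ge_2 by auto
  note ps = ps_param_bounds[OF a y(2) s0 t]
  have kr: "ln (real s) \<le> real k" "real k \<le> ln (real s) + 1"
    using y unfolding k_def by (auto intro: of_nat_ceiling)
  have e: "- (ps_param \<alpha> s t / s) * (real k * real t) = - (real k * (ln t - \<alpha> * ln (ln s)))"
    using s0 t0 unfolding ps_param_def by (simp add: field_simps)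
  have "real ((s + 1) choose k) \<le> real ((s + 1) ^ k)"
    by (rule of_nat_mono[OF binomial_le_pow_any])
  then have "real (card L * ((s + 1) choose k)) \<le> 18 * real s ^ 2 * real t ^ 3 * (real s + 1) ^ k"
    using card_lines(2)[OF x] by (simp add: mult_mono add.commute)
  then have "real (card L * ((s + 1) choose k)) * exp (- (ps_param \<alpha> s t / s) * (real k * real t))
      \<le> 18 * real s ^ 2 * real t ^ 3 * (real s + 1) ^ k * exp (- (real k * (ln t - \<alpha> * ln (ln s))))"
    unfolding e by (rule mult_right_mono) simp
  with prob_event_A_le[OF x ps(1,2) k_def]
  have "measure_pmf.prob (selection \<alpha> s t L x) (event_A P L s x)
      \<le> 18 * real s ^ 2 * real t ^ 3 * (real s + 1) ^ k * exp (- (real k * (ln t - \<alpha> * ln (ln s))))"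
    by (rule order_trans)
  also have "\<dots> \<le> exp (decay (real s))"
    by (rule union_bound_le_exp_decay[OF a y(1) _ _ ps(3) kr]) (use s0 t0 in simp_all)
  finally show ?thesis .
qed

end

theorem mainTheorem3:
  fixes \<alpha> :: real
  assumes "\<alpha> > 4"
  shows "\<forall>\<epsilon>>0. \<exists>S0::nat. \<forall>(s::nat) (t::nat) (P::'a set) L x.
           s \<ge> S0 \<and> gen_quadrangle P L s t \<and> locally_sparse P L s \<and>
           real t \<ge> real s * ln (real s) powr (2 * \<alpha>) \<and> x \<in> P \<longrightarrow>
           measure_pmf.prob (selection \<alpha> s t L x) (event_A P L s x) < \<epsilon>"
proof (intro allI impI)
  fix \<epsilon> :: real assume "\<epsilon> > 0"
  have decay_small: "eventually (\<lambda>n. decay (real n) < ln \<epsilon>) sequentially"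
    using filterlim_compose[OF decay_tendsto_bot filterlim_real_sequentially]
    unfolding filterlim_at_bot_dense by blast
  have ln_large: "eventually (\<lambda>n. ln (real n) \<ge> max 6 (1 + 2 * \<alpha>)) sequentially"
    using filterlim_compose[OF ln_at_top filterlim_real_sequentially] unfolding filterlim_at_top by blast
  obtain S0 where S0: "\<And>n. n \<ge> S0 \<Longrightarrow> decay (real n) < ln \<epsilon> \<and> ln (real n) \<ge> max 6 (1 + 2 * \<alpha>)"
    using eventually_conj[OF decay_small ln_large] unfolding eventually_sequentially by blast
  show "\<exists>S0::nat. \<forall>(s::nat) (t::nat) (P::'a set) L x.
           s \<ge> S0 \<and> gen_quadrangle P L s t \<and> locally_sparse P L s \<and>
           real t \<ge> real s * ln (real s) powr (2 * \<alpha>) \<and> x \<in> P \<longrightarrow>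
           measure_pmf.prob (selection \<alpha> s t L x) (event_A P L s x) < \<epsilon>"
  proof (intro exI allI impI, elim conjE)
    fix s t :: nat and P :: "'a set" and L x
    assume "s \<ge> S0" and gq: "gen_quadrangle P L s t"
      and t: "real t \<ge> real s * ln (real s) powr (2 * \<alpha>)" and x: "x \<in> P"
    have decay_s: "decay (real s) < ln \<epsilon>" and "ln (real s) \<ge> 6" "ln (real s) \<ge> 1 + 2 * \<alpha>"
      using S0[OF \<open>s \<ge> S0\<close>] by auto
    then have "measure_pmf.prob (selection \<alpha> s t L x) (event_A P L s x) \<le> exp (decay (real s))"
      using gen_quad.prob_event_A_le_exp_decay[OF gen_quad.intro[OF gq] assms _ _ t x] by blast
    also have "\<dots> < \<epsilon>" using decay_s \<open>\<epsilon> > 0\<close> by (metis exp_less_cancel_iff exp_ln)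
    finally show "measure_pmf.prob (selection \<alpha> s t L x) (event_A P L s x) < \<epsilon>" .
  qed
qed

end
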